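(* Let $d\ge 1$, $\kappa \in \{0,\dots,d-1\}$, $\varepsilon_0 \ge 0$, $p_0 = \frac{e^{\varepsilon_0}}{1+e^{\varepsilon_0}}$, $\varepsilon\ge 0$, and $\tau = \lceil\frac{d+\kappa+1}{2}\rceil/d$. If \[ \log\Big(\sum_{\ell=0}^{d\tau-1}\binom d\ell\Big) - \log\Big(\sum_{\ell=d\tau}^{d}\binom d\ell\Big) \le \varepsilon, \] then the mechanism $u\mapsto\mathrm{PrivUnitInfty}(u,\kappa,p_0)$ on $[-1,1]^d$ is $(\varepsilon+\varepsilon_0)$-locally differentially private.
   Context: $\mathrm{PrivUnitInfty}(u,\kappa,p)$ for $u\in[-1,1]^d$, $\kappa\in\{0,\dots,d-1\}$, $p\in[1/2,1]$: independently for each $j$, set $\widehat U_j=1$ with probability $\frac{1+u_j}2$ and $\widehat U_j=-1$ otherwise. Then with probability $p$ draw $V$ uniformly from $\{v\in\{-1,1\}^d:\langle v,\widehat U\rangle>\kappa\}$, and otherwise uniformly from $\{v\in\{-1,1\}^d:\langle v,\widehat U\rangle\le\kappa\}$. With $\tau=\lceil\frac{d+\kappa+1}2\rceil/d$ set $m = p\frac{\binom{d-1}{d\tau-1}}{\sum_{\ell=d\tau}^d\binom d\ell} - (1-p)\frac{\binom{d-1}{d\tau-1}}{\sum_{\ell=0}^{d\tau-1}\binom d\ell}$ and output $Z=V/m$. A mechanism $M$ is $\varepsilon$-locally differentially private if $\mathbb P(M(u)\in S)\le e^{\varepsilon}\mathbb P(M(u')\in S)$ for all inputs $u,u'$ and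 all sets $S$. *)

theory Defs
  imports "HOL-Probability.Probability"
begin

text \<open>Vectors in R^d / {-1,1}^d are represented as functions nat => real,
  with coordinates 0..d-1 (value 0 outside).\<close>

definition sign_cube :: "nat \<Rightarrow> (nat \<Rightarrow> real) set" where
  "sign_cube d = {v. (\<forall>j<d. v j = 1 \<or> v j = -1) \<and> (\<forall>j. d \<le> j \<longrightarrow> v j = 0)}"

definition ip :: "nat \<Rightarrow> (nat \<Rightarrow> real) \<Rightarrow> (nat \<Rightarrow> real) \<Rightarrow> real" where
  "ip d v w = (\<Sum>j<d. v j * w j)"

definition dtau :: "nat \<Rightarrow> nat \<Rightarrow> nat" where
  "dtau d \<kappa> = nat \<lceil>(real d + real \<kappa> + 1) / 2\<rceil>"

definition tau :: "nat \<Rightarrow> nat \<Rightarrow> real" where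
  "tau d \<kappa> = real (dtau d \<kappa>) / real d"

definition priv_m :: "nat \<Rightarrow> nat \<Rightarrow> real \<Rightarrow> real" where
  "priv_m d \<kappa> p =
     p * real ((d - 1) choose (dtau d \<kappa> - 1)) / real (\<Sum>l = dtau d \<kappa>..d. d choose l)
     - (1 - p) * real ((d - 1) choose (dtau d \<kappa> - 1)) / real (\<Sum>l = 0..dtau d \<kappa> - 1. d choose l)"

definition round_pmf :: "nat \<Rightarrow> (nat \<Rightarrow> real) \<Rightarrow> (nat \<Rightarrow> real) pmf" where
  "round_pmf d u = Pi_pmf {..<d} 0
     (\<lambda>j. map_pmf (\<lambda>b. if b then 1 else -1) (bernoulli_pmf ((1 + u j) / 2)))"

definition PrivUnitInfty :: "nat \<Rightarrow> (nat \<Rightarrow> real) \<Rightarrow> nat \<Rightarrow> real \<Rightarrow> (nat \<Rightarrow> real) pmf" where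
  "PrivUnitInfty d u \<kappa> p =
     map_pmf (\<lambda>v j. v j / priv_m d \<kappa> p)
       (do {
          U \<leftarrow> round_pmf d u;
          b \<leftarrow> bernoulli_pmf p;
          if b then pmf_of_set {v \<in> sign_cube d. ip d v U > real \<kappa>}
          else pmf_of_set {v \<in> sign_cube d. ip d v U \<le> real \<kappa>}
        })"

definition local_dp :: "'a set \<Rightarrow> ('a \<Rightarrow> 'b pmf) \<Rightarrow> real \<Rightarrow> bool" where
  "local_dp X M \<epsilon> \<longleftrightarrow>
     (\<forall>u\<in>X. \<forall>u'\<in>X. \<forall>S. measure_pmf.prob (M u) S \<le> exp \<epsilon> * measure_pmf.prob (M u') S)"

definition input_cube :: "nat \<Rightarrow> (nat \<Rightarrow> real) set" where
  "input_cube d = {u. (\<forall>j<d. -1 \<le> u j \<and> u j \<le> 1) \<and> (\<forall>j. d \<le> j \<longrightarrow> u j = 0)}"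

end

theory Submission
  imports Defs
begin

text \<open>Conditionally on the rounded vector U, the output is (a rescaling of) a sign vector drawn
  uniformly from the cap {v. <v,U> > kappa} with probability p and uniformly from its complement
  otherwise. Identifying v with the set of coordinates on which it agrees with U shows that these
  two sets have N1 = sum (d choose l) over l >= d tau and N0 = sum (d choose l) over l < d tau
  elements, whatever U is. So for every input the probability of an event lies between
  (1 - p)/N0 and p/N1 times the number of sign vectors in it, and the ratio of the two bounds is
  exp eps0 * N0/N1 <= exp (eps + eps0).\<close>

lemma measure_bind_pmf:
  "measure_pmf.prob (bind_pmf M f) X = (\<integral>x. measure_pmf.prob (f x) X \<partial>M)"
  unfolding measure_pmf_bind
  by (subst measure_pmf.measure_bind[where N="count_space UNIV"])
     (auto simp: measurable_measure_pmf intro: measure_pmf_in_subprob_algebra)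

lemma integrable_measure_pmf_prob:
  fixes M :: "'a pmf"
  shows "integrable M (\<lambda>x. measure_pmf.prob (f x) X)"
  by (rule measure_pmf.integrable_const_bound[where B=1]) auto

lemma measure_bind_pmf_ge:
  assumes "\<And>x. x \<in> set_pmf M \<Longrightarrow> c \<le> measure_pmf.prob (f x) X"
  shows "c \<le> measure_pmf.prob (bind_pmf M f) X"
proof -
  have "(\<integral>x. c \<partial>M) \<le> (\<integral>x. measure_pmf.prob (f x) X \<partial>M)"
    using assms by (intro integral_mono_AE integrable_measure_pmf_prob) (auto simp: AE_measure_pmf_iff)
  then show ?thesis by (simp add: measure_bind_pmf)
qed

lemma measure_bind_pmf_le:
  assumes "\<And>x. x \<in> set_pmf M \<Longrightarrow> measure_pmf.prob (f x) X \<le> c"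
  shows "measure_pmf.prob (bind_pmf M f) X \<le> c"
proof -
  have "(\<integral>x. measure_pmf.prob (f x) X \<partial>M) \<le> (\<integral>x. c \<partial>M)"
    using assms by (intro integral_mono_AE integrable_measure_pmf_prob) (auto simp: AE_measure_pmf_iff)
  then show ?thesis by (simp add: measure_bind_pmf)
qed

lemma measure_uniform_mixture_bounds:
  fixes A B :: "'a set"
  assumes "finite A" "A \<noteq> {}" "finite B" "B \<noteq> {}" "A \<inter> B = {}"
    and "0 \<le> p" "p \<le> 1" and lo_le_hi: "(1 - p) / card B \<le> p / card A"
  defines "M \<equiv> bernoulli_pmf p \<bind> (\<lambda>b. if b then pmf_of_set A else pmf_of_set B)"
  shows "(1 - p) / card B * card ((A \<union> B) \<inter> T) \<le> measure_pmf.prob M T"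
    and "measure_pmf.prob M T \<le> p / card A * card ((A \<union> B) \<inter> T)"
proof -
  define lo hi where "lo = (1 - p) / card B" and "hi = p / card A"
  have "measure_pmf.prob M T = hi * card (A \<inter> T) + lo * card (B \<inter> T)"
    using assms by (simp add: M_def lo_def hi_def measure_bind_pmf measure_pmf_of_set mult.commute)
  moreover have "card ((A \<union> B) \<inter> T) = card (A \<inter> T) + card (B \<inter> T)"
    using assms by (simp add: Int_Un_distrib2 card_Un_disjoint disjoint_iff)
  moreover have "0 \<le> lo" "lo \<le> hi" using \<open>p \<le> 1\<close> lo_le_hi by (simp_all add: lo_def hi_def)
  ultimately show "lo * card ((A \<union> B) \<inter> T) \<le> measure_pmf.prob M T"
    and "measure_pmf.prob M T \<le> hi * card ((A \<union> B) \<inter> T)"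
    by (auto simp: distrib_left intro: mult_right_mono add_mono)
qed

lemma local_dp_sandwich:
  assumes "\<And>u S. u \<in> X \<Longrightarrow> lo * \<nu> S \<le> measure_pmf.prob (M u) S"
    and "\<And>u S. u \<in> X \<Longrightarrow> measure_pmf.prob (M u) S \<le> hi * \<nu> S"
    and "\<And>S. 0 \<le> \<nu> S" and "hi \<le> exp \<epsilon> * lo"
  shows "local_dp X M \<epsilon>"
  unfolding local_dp_def
proof (intro ballI allI)
  fix u u' S assume "u \<in> X" "u' \<in> X"
  have "measure_pmf.prob (M u) S \<le> hi * \<nu> S" using assms(2) \<open>u \<in> X\<close> .
  also have "\<dots> \<le> exp \<epsilon> * (lo * \<nu> S)"
    using assms(3,4) by (simp add: mult.assoc[symmetric] mult_right_mono)
  also have "\<dots> \<le> exp \<epsilon> * measure_pmf.prob (M u') S"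
    using assms(1) \<open>u' \<in> X\<close> by simp
  finally show "measure_pmf.prob (M u) S \<le> exp \<epsilon> * measure_pmf.prob (M u') S" .
qed

lemma pm_one_mult:
  fixes a b :: real
  assumes "a = 1 \<or> a = -1" "b = 1 \<or> b = -1"
  shows "a * b = (if a = b then 1 else -1)"
  using assms by auto

lemma pm_one_neq_iff:
  fixes a b :: real
  assumes "a = 1 \<or> a = -1" "b = 1 \<or> b = -1"
  shows "a \<noteq> b \<longleftrightarrow> a = - b"
  using assms by auto

lemma ip_sign_cube:
  assumes "U \<in> sign_cube d" "v \<in> sign_cube d"
  shows "ip d v U = 2 * real (card {j \<in> {..<d}. v j = U j}) - real d"
proof -
  let ?A = "{j \<in> {..<d}. v j = U j}"
  have "ip d v U = (\<Sum>j<d. if v j = U j then 1 else -1)"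
    unfolding ip_def using assms by (intro sum.cong refl) (simp add: sign_cube_def pm_one_mult)
  also have "\<dots> = real (card ?A) - real (card ({..<d} - ?A))"
    by (subst sum.If_cases) (auto simp: Int_def set_diff_eq intro!: arg_cong[where f=card])
  also have "card ({..<d} - ?A) = d - card ?A"
    by (subst card_Diff_subset) auto
  finally show ?thesis
    using card_mono[of "{..<d}" ?A] by (force simp: of_nat_diff)
qed

lemma bij_betw_sign_cube_agreements:
  assumes "U \<in> sign_cube d"
  shows "bij_betw (\<lambda>v. {j \<in> {..<d}. v j = U j}) (sign_cube d) (Pow {..<d})"
proof (rule bij_betw_byWitness[where f'="\<lambda>A j. if j \<in> A then U j else if j < d then - U j else 0"])
  show "\<forall>v \<in> sign_cube d. (\<lambda>j. if j \<in> {j \<in> {..<d}. v j = U j} then U j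
          else if j < d then - U j else 0) = v"
    using assms by (auto simp: sign_cube_def fun_eq_iff pm_one_neq_iff)
  show "(\<lambda>A j. if j \<in> A then U j else if j < d then - U j else 0) ` Pow {..<d} \<subseteq> sign_cube d"
    using assms unfolding sign_cube_def by force
qed (use assms in \<open>auto simp: sign_cube_def\<close>)

lemma card_Pow_filter_card:
  "card {A \<in> Pow {..<d}. Q (card A)} = (\<Sum>l | l \<le> d \<and> Q l. d choose l)"
proof -
  have "{A \<in> Pow {..<d}. Q (card A)} = (\<Union>l\<in>{l. l \<le> d \<and> Q l}. {A. A \<subseteq> {..<d} \<and> card A = l})"
    using card_mono[of "{..<d}"] by fastforce
  also have "card \<dots> = (\<Sum>l | l \<le> d \<and> Q l. card {A. A \<subseteq> {..<d} \<and> card A = l})"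
    by (rule card_UN_disjoint) (auto intro: finite_subset[of _ "Pow {..<d}"])
  finally show ?thesis by (simp add: n_subsets)
qed

lemma card_sign_cube_filter_ip:
  assumes "U \<in> sign_cube d"
  shows "card {v \<in> sign_cube d. P (ip d v U)} = (\<Sum>l | l \<le> d \<and> P (2 * real l - real d). d choose l)"
proof -
  let ?agree = "\<lambda>v. {j \<in> {..<d}. v j = U j}"
  let ?V = "{v \<in> sign_cube d. P (2 * real (card (?agree v)) - real d)}"
  have bij: "bij_betw ?agree (sign_cube d) (Pow {..<d})"
    using bij_betw_sign_cube_agreements[OF assms] .
  have "card {v \<in> sign_cube d. P (ip d v U)} = card ?V"
    using ip_sign_cube[OF assms] by (intro arg_cong[where f=card]) auto
  also have "\<dots> = card (?agree ` ?V)"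
    by (rule card_image[symmetric], rule inj_on_subset[OF bij_betw_imp_inj_on[OF bij]]) blast
  also have "?agree ` ?V = {A \<in> ?agree ` sign_cube d. P (2 * real (card A) - real d)}"
    by blast
  also have "?agree ` sign_cube d = Pow {..<d}"
    using bij by (rule bij_betw_imp_surj_on)
  finally show ?thesis
    using card_Pow_filter_card[of d "\<lambda>l. P (2 * real l - real d)"] by simp
qed

lemma dtau_le_iff: "dtau d \<kappa> \<le> a \<longleftrightarrow> real \<kappa> < 2 * real a - real d"
proof -
  have "dtau d \<kappa> \<le> a \<longleftrightarrow> (real d + real \<kappa> + 1) / 2 \<le> real a"
    unfolding dtau_def by (simp add: nat_le_iff ceiling_le_iff)
  also have "\<dots> \<longleftrightarrow> real (d + \<kappa> + 1) \<le> real (2 * a)" by (simp add: field_simps)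
  also have "\<dots> \<longleftrightarrow> d + \<kappa> < 2 * a" by (simp only: of_nat_le_iff) linarith
  also have "\<dots> \<longleftrightarrow> real (d + \<kappa>) < real (2 * a)" by (simp only: of_nat_less_iff)
  also have "\<dots> \<longleftrightarrow> real \<kappa> < 2 * real a - real d" by simp linarith
  finally show ?thesis .
qed

lemma less_double_dtau: "d < 2 * dtau d \<kappa>"
  using dtau_le_iff[of d \<kappa> "dtau d \<kappa>"] by linarith

lemma dtau_le: "\<kappa> < d \<Longrightarrow> dtau d \<kappa> \<le> d"
  using dtau_le_iff[of d \<kappa> d] by linarith

lemma binomial_upper_sum_le_lower_sum:
  assumes "t \<le> d" "d < 2 * t"
  shows "(\<Sum>l = t..d. d choose l) \<le> (\<Sum>l = 0..t - 1. d choose l)"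
proof -
  have "(\<Sum>l = t..d. d choose l) = (\<Sum>l = 0..d - t. d choose l)"
    by (rule sum.reindex_bij_witness[where i="\<lambda>l. d - l" and j="\<lambda>l. d - l"])
       (use assms in \<open>auto simp: binomial_symmetric[symmetric]\<close>)
  also have "\<dots> \<le> (\<Sum>l = 0..t - 1. d choose l)"
    by (rule sum_mono2) (use assms in auto)
  finally show ?thesis .
qed

definition upper_tail :: "nat \<Rightarrow> nat \<Rightarrow> nat" where
  "upper_tail d \<kappa> = (\<Sum>l = dtau d \<kappa>..d. d choose l)"

definition lower_tail :: "nat \<Rightarrow> nat \<Rightarrow> nat" where
  "lower_tail d \<kappa> = (\<Sum>l = 0..dtau d \<kappa> - 1. d choose l)"

lemma upper_tail_pos: "\<kappa> < d \<Longrightarrow> 0 < upper_tail d \<kappa>"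
  unfolding upper_tail_def using dtau_le by (intro sum_pos2[where i=d]) auto

lemma upper_tail_le_lower_tail: "\<kappa> < d \<Longrightarrow> upper_tail d \<kappa> \<le> lower_tail d \<kappa>"
  unfolding upper_tail_def lower_tail_def
  using binomial_upper_sum_le_lower_sum dtau_le less_double_dtau by blast

lemma card_sign_cube_ip_greater:
  assumes "U \<in> sign_cube d"
  shows "card {v \<in> sign_cube d. real \<kappa> < ip d v U} = upper_tail d \<kappa>"
proof -
  have "{l. l \<le> d \<and> real \<kappa> < 2 * real l - real d} = {dtau d \<kappa>..d}"
    by (auto simp flip: dtau_le_iff)
  then show ?thesis
    unfolding upper_tail_def using card_sign_cube_filter_ip[OF assms, of "\<lambda>x. real \<kappa> < x"] by simp
qed

lemma card_sign_cube_ip_le: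
  assumes "U \<in> sign_cube d" "\<kappa> < d"
  shows "card {v \<in> sign_cube d. ip d v U \<le> real \<kappa>} = lower_tail d \<kappa>"
proof -
  have "{l. l \<le> d \<and> 2 * real l - real d \<le> real \<kappa>} = {0..dtau d \<kappa> - 1}"
    using dtau_le[OF assms(2)] less_double_dtau[of d \<kappa>] by (auto simp: not_less[symmetric] simp flip: dtau_le_iff)
  then show ?thesis
    unfolding lower_tail_def using card_sign_cube_filter_ip[OF assms(1), of "\<lambda>x. x \<le> real \<kappa>"] by simp
qed

definition cap_choice :: "nat \<Rightarrow> nat \<Rightarrow> real \<Rightarrow> (nat \<Rightarrow> real) \<Rightarrow> (nat \<Rightarrow> real) pmf" where
  "cap_choice d \<kappa> p U =
     bernoulli_pmf p \<bind> (\<lambda>b. if b then pmf_of_set {v \<in> sign_cube d. ip d v U > real \<kappa>}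
                              else pmf_of_set {v \<in> sign_cube d. ip d v U \<le> real \<kappa>})"

lemma PrivUnitInfty_conv_cap_choice:
  "PrivUnitInfty d u \<kappa> p = map_pmf (\<lambda>v j. v j / priv_m d \<kappa> p) (round_pmf d u \<bind> cap_choice d \<kappa> p)"
  unfolding PrivUnitInfty_def cap_choice_def ..

lemma set_round_pmf: "set_pmf (round_pmf d u) \<subseteq> sign_cube d"
proof
  fix U assume "U \<in> set_pmf (round_pmf d u)"
  then have "U \<in> PiE_dflt {..<d} 0 (set_pmf \<circ> (\<lambda>j. map_pmf (\<lambda>b. if b then 1 else -1) (bernoulli_pmf ((1 + u j) / 2))))"
    unfolding round_pmf_def by (rule subsetD[OF set_Pi_pmf_subset'[OF finite_lessThan]])
  then show "U \<in> sign_cube d" by (auto simp: PiE_dflt_def sign_cube_def)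
qed

lemma measure_cap_choice_bounds:
  assumes "U \<in> sign_cube d" "\<kappa> < d" "1/2 \<le> p" "p \<le> 1"
  shows "(1 - p) / lower_tail d \<kappa> * card (sign_cube d \<inter> T) \<le> measure_pmf.prob (cap_choice d \<kappa> p U) T"
    and "measure_pmf.prob (cap_choice d \<kappa> p U) T \<le> p / upper_tail d \<kappa> * card (sign_cube d \<inter> T)"
proof -
  let ?A = "{v \<in> sign_cube d. ip d v U > real \<kappa>}" and ?B = "{v \<in> sign_cube d. ip d v U \<le> real \<kappa>}"
  have cards: "card ?A = upper_tail d \<kappa>" "card ?B = lower_tail d \<kappa>"
    using card_sign_cube_ip_greater card_sign_cube_ip_le assms by auto
  have tails: "0 < upper_tail d \<kappa>" "upper_tail d \<kappa> \<le> lower_tail d \<kappa>"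
    using upper_tail_pos upper_tail_le_lower_tail assms by auto
  then have "0 < card ?A" "0 < card ?B" using cards by linarith+
  then have "finite ?A" "?A \<noteq> {}" "finite ?B" "?B \<noteq> {}" by (simp_all add: card_gt_0_iff)
  moreover have "?A \<inter> ?B = {}" by auto
  moreover have "(1 - p) / card ?B \<le> p / card ?A"
    unfolding cards using assms tails by (intro frac_le) auto
  moreover have "?A \<union> ?B = sign_cube d" by auto
  ultimately show "(1 - p) / lower_tail d \<kappa> * card (sign_cube d \<inter> T) \<le> measure_pmf.prob (cap_choice d \<kappa> p U) T"
    and "measure_pmf.prob (cap_choice d \<kappa> p U) T \<le> p / upper_tail d \<kappa> * card (sign_cube d \<inter> T)"
    using measure_uniform_mixture_bounds[of ?A ?B p T] assms(3,4)
    unfolding cap_choice_def cards by simp_all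
qed

lemma measure_PrivUnitInfty_bounds:
  assumes "\<kappa> < d" "1/2 \<le> p" "p \<le> 1"
  defines "\<nu> S \<equiv> real (card (sign_cube d \<inter> (\<lambda>v j. v j / priv_m d \<kappa> p) -` S))"
  shows "(1 - p) / lower_tail d \<kappa> * \<nu> S \<le> measure_pmf.prob (PrivUnitInfty d u \<kappa> p) S"
    and "measure_pmf.prob (PrivUnitInfty d u \<kappa> p) S \<le> p / upper_tail d \<kappa> * \<nu> S"
  unfolding PrivUnitInfty_conv_cap_choice measure_map_pmf \<nu>_def
  using set_round_pmf measure_cap_choice_bounds[OF _ assms(1-3)]
  by (blast intro: measure_bind_pmf_ge measure_bind_pmf_le)+

lemma logistic_ratio_le_exp:
  fixes p a b \<epsilon> \<epsilon>0 :: real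
  assumes "p = exp \<epsilon>0 / (1 + exp \<epsilon>0)" "0 < a" "0 < b" "ln b - ln a \<le> \<epsilon>"
  shows "p / a \<le> exp (\<epsilon> + \<epsilon>0) * ((1 - p) / b)"
proof -
  have "ln (b / a) \<le> \<epsilon>" using assms(2-4) by (simp add: ln_div)
  then have "b / a \<le> exp \<epsilon>"
    using assms(2,3) by (metis divide_pos_pos exp_le_cancel_iff exp_ln)
  then have b_le: "b \<le> exp \<epsilon> * a" using \<open>0 < a\<close> by (simp add: field_simps)
  have "0 < 1 + exp \<epsilon>0" by (simp add: add_pos_pos)
  then have q_eq: "1 - p = 1 / (1 + exp \<epsilon>0)" and p_eq: "p = exp \<epsilon>0 * (1 - p)"
    using assms(1) by (simp_all add: field_simps)
  have "0 \<le> 1 - p" using q_eq by simp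
  have "p * b = exp \<epsilon>0 * (1 - p) * b" using p_eq by simp
  also have "\<dots> \<le> exp \<epsilon>0 * (1 - p) * (exp \<epsilon> * a)"
    using b_le \<open>0 \<le> 1 - p\<close> by (intro mult_left_mono) auto
  also have "\<dots> = exp (\<epsilon> + \<epsilon>0) * (1 - p) * a" by (simp add: exp_add)
  finally show ?thesis using assms(2,3) by (simp add: field_simps)
qed

theorem theorem4p5:
  fixes d \<kappa> :: nat and \<epsilon>0 \<epsilon> p0 :: real
  assumes "d \<ge> 1" and "\<kappa> \<le> d - 1" and "\<epsilon>0 \<ge> 0" and "\<epsilon> \<ge> 0"
    and "p0 = exp \<epsilon>0 / (1 + exp \<epsilon>0)"
    and "ln (real (\<Sum>l = 0..dtau d \<kappa> - 1. d choose l))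
         - ln (real (\<Sum>l = dtau d \<kappa>..d. d choose l)) \<le> \<epsilon>"
  shows "local_dp (input_cube d) (\<lambda>u. PrivUnitInfty d u \<kappa> p0) (\<epsilon> + \<epsilon>0)"
proof -
  have "\<kappa> < d" using assms(1,2) by linarith
  moreover have "1/2 \<le> p0" "p0 \<le> 1"
    using assms(3,5) by (simp_all add: field_simps add_pos_pos)
  moreover have "p0 / upper_tail d \<kappa> \<le> exp (\<epsilon> + \<epsilon>0) * ((1 - p0) / lower_tail d \<kappa>)"
  proof (rule logistic_ratio_le_exp[OF assms(5)])
    show "0 < real (upper_tail d \<kappa>)" "0 < real (lower_tail d \<kappa>)"
      using upper_tail_pos[OF \<open>\<kappa> < d\<close>] upper_tail_le_lower_tail[OF \<open>\<kappa> < d\<close>] by simp_all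
    show "ln (lower_tail d \<kappa>) - ln (upper_tail d \<kappa>) \<le> \<epsilon>"
      using assms(6) unfolding upper_tail_def lower_tail_def .
  qed
  ultimately show ?thesis
    by (intro local_dp_sandwich[where \<nu>="\<lambda>S. card (sign_cube d \<inter> (\<lambda>v j. v j / priv_m d \<kappa> p0) -` S)"])
       (auto intro: measure_PrivUnitInfty_bounds)
qed

end
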